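(* For every formula $\phi$ of the language of $\mathbf{GLP}$, $\mathbf{GLP}\vdash[1]\phi$ if and only if $\mathbf{GLP}\{[0]q\to q\}\vdash\phi$.
   Context: $\mathbf{GLP}$ is the propositional polymodal logic with modalities $[0],[1],[2],\dots$ ($\langle k\rangle:=\neg[k]\neg$) axiomatized by classical tautologies; $[k](\phi\to\psi)\to([k]\phi\to[k]\psi)$; $[k]([k]\phi\to\phi)\to[k]\phi$; $\langle j\rangle\phi\to[k]\langle j\rangle\phi$ for $j<k$; $[j]\phi\to[k]\phi$ for $j\leq k$; rules modus ponens and necessitation. $\mathbf{GLP}\{[0]q\to q\}$ (with $q$ a propositional variable) is the smallest set of formulas containing all theorems of $\mathbf{GLP}$ and the formula $[0]q\to q$ and closed under modus ponens and substitution (replacing variables uniformly by formulas); necessitation is not a rule of this set. *)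

theory Defs
  imports Main
begin

datatype fm = Var nat | Bot | Imp fm fm | Box nat fm

definition Neg :: "fm \<Rightarrow> fm" where "Neg p = Imp p Bot"
definition Dia :: "nat \<Rightarrow> fm \<Rightarrow> fm" where "Dia k p = Neg (Box k (Neg p))"

fun tval :: "(fm \<Rightarrow> bool) \<Rightarrow> fm \<Rightarrow> bool" where
  "tval V (Var n) = V (Var n)"
| "tval V Bot = False"
| "tval V (Imp p q) = (tval V p \<longrightarrow> tval V q)"
| "tval V (Box k p) = V (Box k p)"

definition Taut :: "fm \<Rightarrow> bool" where "Taut p = (\<forall>V. tval V p)"

inductive GLP :: "fm \<Rightarrow> bool" where
  taut: "Taut p \<Longrightarrow> GLP p"
| K: "GLP (Imp (Box k (Imp p q)) (Imp (Box k p) (Box k q)))"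
| Loeb: "GLP (Imp (Box k (Imp (Box k p) p)) (Box k p))"
| ax3: "j < k \<Longrightarrow> GLP (Imp (Dia j p) (Box k (Dia j p)))"
| mono: "j \<le> k \<Longrightarrow> GLP (Imp (Box j p) (Box k p))"
| mp: "GLP (Imp p q) \<Longrightarrow> GLP p \<Longrightarrow> GLP q"
| nec: "GLP p \<Longrightarrow> GLP (Box k p)"

fun subst :: "(nat \<Rightarrow> fm) \<Rightarrow> fm \<Rightarrow> fm" where
  "subst s (Var n) = s n"
| "subst s Bot = Bot"
| "subst s (Imp p q) = Imp (subst s p) (subst s q)"
| "subst s (Box k p) = Box k (subst s p)"

(* GLP{[0]q -> q}, with q the propositional variable Var 0 *)
inductive GLPq :: "fm \<Rightarrow> bool" where
  glp: "GLP p \<Longrightarrow> GLPq p"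
| refl0: "GLPq (Imp (Box 0 (Var 0)) (Var 0))"
| mp: "GLPq (Imp p q) \<Longrightarrow> GLPq p \<Longrightarrow> GLPq q"
| sub: "GLPq p \<Longrightarrow> GLPq (subst s p)"

end

theory Submission
  imports Defs
begin

(* Soundness: for j < k, GLP proves the reflection principle [k]([j]p \<rightarrow> p), because
   [j]p \<rightarrow> [k]p and \<not>[j]p \<rightarrow> [k]\<not>[j]p; moreover [1] commutes with modus ponens
   and substitution, so [1] applied to every GLPq-theorem is a GLP-theorem.
   Completeness: the translation replacing each outermost [1]\<psi> by \<psi> \<and> [1]\<psi> and each
   outermost [k]\<psi>, k \<ge> 2, by \<top> sends GLP-theorems to GLPq-theorems; it sends [1]\<phi>
   to \<phi> \<and> [1]\<phi>. *)

fun psubst :: "(fm \<Rightarrow> fm) \<Rightarrow> fm \<Rightarrow> fm" where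
  "psubst f (Var n) = f (Var n)"
| "psubst f Bot = Bot"
| "psubst f (Imp p q) = Imp (psubst f p) (psubst f q)"
| "psubst f (Box k p) = f (Box k p)"

lemma tval_psubst: "tval V (psubst f p) = tval (\<lambda>a. tval V (f a)) p"
  by (induction p) simp_all

lemma Taut_psubst: "Taut p \<Longrightarrow> Taut (psubst f p)"
  by (simp add: Taut_def tval_psubst)

lemma subst_eq_psubst: "subst s p = psubst (subst s) p"
  by (induction p) simp_all

lemma Taut_subst: "Taut p \<Longrightarrow> Taut (subst s p)"
  by (simp add: subst_eq_psubst Taut_psubst)

lemma subst_Dia: "subst s (Dia k p) = Dia k (subst s p)"
  by (simp add: Dia_def Neg_def)

lemma GLP_subst: "GLP p \<Longrightarrow> GLP (subst s p)"
proof (induction rule: GLP.induct)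
  case (ax3 j k p)
  then show ?case by (simp add: subst_Dia GLP.ax3)
qed (auto intro: GLP.intros Taut_subst)

lemma GLP_taut_mp: "Taut (Imp a b) \<Longrightarrow> GLP a \<Longrightarrow> GLP b"
  by (meson GLP.mp GLP.taut)

lemma GLP_taut_mp2: "Taut (Imp a (Imp b c)) \<Longrightarrow> GLP a \<Longrightarrow> GLP b \<Longrightarrow> GLP c"
  by (meson GLP.mp GLP.taut)

lemma GLP_imp_trans: "GLP (Imp a b) \<Longrightarrow> GLP (Imp b c) \<Longrightarrow> GLP (Imp a c)"
  by (rule GLP_taut_mp2[of "Imp a b" "Imp b c"]) (auto simp: Taut_def)

lemma GLP_Box_mono: "GLP (Imp a b) \<Longrightarrow> GLP (Imp (Box k a) (Box k b))"
  by (meson GLP.K GLP.mp GLP.nec)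

lemma GLP_Box_taut_mono: "Taut (Imp a b) \<Longrightarrow> GLP (Imp (Box k a) (Box k b))"
  by (intro GLP_Box_mono GLP.taut)

lemma GLP_Box_mp: "GLP (Box k (Imp a b)) \<Longrightarrow> GLP (Box k a) \<Longrightarrow> GLP (Box k b)"
  by (meson GLP.K GLP.mp)

lemma GLP_Box_reflection:
  assumes "j < k"
  shows "GLP (Box k (Imp (Box j p) p))"
proof -
  have "GLP (Imp (Box j p) (Box k p))"
    using assms by (intro GLP.mono) simp
  moreover have "GLP (Imp (Box k p) (Box k (Imp (Box j p) p)))"
    by (rule GLP_Box_taut_mono) (simp add: Taut_def)
  ultimately have if_Box: "GLP (Imp (Box j p) (Box k (Imp (Box j p) p)))"
    by (rule GLP_imp_trans)
  have Box_double_neg: "GLP (Imp (Box j p) (Box j (Neg (Neg p))))"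
    by (rule GLP_Box_taut_mono) (simp add: Taut_def Neg_def)
  have Box_double_neg_elim: "GLP (Imp (Box j (Neg (Neg p))) (Box j p))"
    by (rule GLP_Box_taut_mono) (simp add: Taut_def Neg_def)
  have "GLP (Imp (Neg (Box j p)) (Dia j (Neg p)))"
    by (rule GLP_taut_mp[OF _ Box_double_neg_elim]) (auto simp: Taut_def Neg_def Dia_def)
  moreover have "GLP (Imp (Dia j (Neg p)) (Box k (Dia j (Neg p))))"
    using assms by (rule GLP.ax3)
  moreover have "GLP (Imp (Dia j (Neg p)) (Imp (Box j p) p))"
    by (rule GLP_taut_mp[OF _ Box_double_neg]) (auto simp: Taut_def Neg_def Dia_def)
  then have "GLP (Imp (Box k (Dia j (Neg p))) (Box k (Imp (Box j p) p)))"
    by (rule GLP_Box_mono)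
  ultimately have if_not_Box: "GLP (Imp (Neg (Box j p)) (Box k (Imp (Box j p) p)))"
    by (meson GLP_imp_trans)
  show ?thesis
    by (rule GLP_taut_mp2[OF _ if_Box if_not_Box]) (auto simp: Taut_def Neg_def)
qed

lemma GLP_Box_of_GLPq:
  assumes "GLPq p" and "0 < k"
  shows "GLP (Box k p)"
  using assms(1)
proof (induction rule: GLPq.induct)
  case (glp p)
  then show ?case by (rule GLP.nec)
next
  case refl0
  show ?case using assms(2) by (rule GLP_Box_reflection)
next
  case (mp p q)
  then show ?case by (blast intro: GLP_Box_mp)
next
  case (sub p s)
  then show ?case using GLP_subst[of "Box k p" s] by simp
qed

lemma GLPq_taut_mp: "Taut (Imp a b) \<Longrightarrow> GLPq a \<Longrightarrow> GLPq b"
  by (meson GLPq.mp GLPq.glp GLP.taut)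

lemma GLPq_taut_mp2: "Taut (Imp a (Imp b c)) \<Longrightarrow> GLPq a \<Longrightarrow> GLPq b \<Longrightarrow> GLPq c"
  by (meson GLPq.mp GLPq.glp GLP.taut)

lemma GLPq_reflection: "GLPq (Imp (Box 0 p) p)"
  using GLPq.sub[OF GLPq.refl0, of "\<lambda>_. p"] by simp

definition And :: "fm \<Rightarrow> fm \<Rightarrow> fm" where "And a b = Neg (Imp a (Neg b))"
definition Top :: fm where "Top = Imp Bot Bot"

definition tr_atom :: "fm \<Rightarrow> fm" where
  "tr_atom a = (case a of
     Box k p \<Rightarrow> if k = 0 then a else if k = 1 then And p a else Top
   | _ \<Rightarrow> a)"

(* Only outermost boxes are translated, so necessitation [1]p of a GLP-theorem p
   becomes p \<and> [1]p, which GLPq proves untranslated. *)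
definition tr :: "fm \<Rightarrow> fm" where "tr = psubst tr_atom"

lemma tr_simps [simp]:
  "tr (Var n) = Var n"
  "tr Bot = Bot"
  "tr (Imp p q) = Imp (tr p) (tr q)"
  "tr (Box k p) = (if k = 0 then Box k p else if k = 1 then And p (Box k p) else Top)"
  by (simp_all add: tr_def tr_atom_def)

lemma GLPq_tr_of_GLP: "GLP p \<Longrightarrow> GLPq (tr p)"
proof (induction rule: GLP.induct)
  case (taut p)
  then show ?case using Taut_psubst by (simp add: tr_def GLPq.glp GLP.taut)
next
  case (K k p q)
  show ?case
    by (rule GLPq_taut_mp[OF _ GLPq.glp[OF GLP.K[of k p q]]])
      (auto simp: Taut_def And_def Neg_def Top_def)
next
  case (Loeb k p)
  show ?case
    by (rule GLPq_taut_mp[OF _ GLPq.glp[OF GLP.Loeb[of k p]]])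
      (auto simp: Taut_def And_def Neg_def Top_def)
next
  case (ax3 j k p)
  then show ?case
    by (intro GLPq_taut_mp[OF _ GLPq.glp[OF GLP.ax3[of j k p]]])
      (auto simp: Taut_def And_def Neg_def Dia_def Top_def)
next
  case (mono j k p)
  then show ?case
    by (intro GLPq_taut_mp2[OF _ GLPq.glp[OF GLP.mono[of j k p]] GLPq_reflection])
      (auto simp: Taut_def And_def Neg_def Top_def)
next
  case (mp p q)
  then show ?case by (simp add: GLPq.mp)
next
  case (nec p k)
  then show ?case
    by (intro GLPq_taut_mp2[OF _ GLPq.glp GLPq.glp[OF GLP.nec[of p k]]])
      (auto simp: Taut_def And_def Neg_def Top_def)
qed

theorem mainTheorem10:
  shows "\<forall>\<phi>. GLP (Box 1 \<phi>) \<longleftrightarrow> GLPq \<phi>"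
proof (intro allI iffI)
  fix \<phi>
  assume "GLP (Box 1 \<phi>)"
  then have "GLPq (And \<phi> (Box 1 \<phi>))"
    using GLPq_tr_of_GLP by fastforce
  then show "GLPq \<phi>"
    by (rule GLPq_taut_mp[rotated]) (auto simp: Taut_def And_def Neg_def)
next
  fix \<phi>
  assume "GLPq \<phi>"
  then show "GLP (Box 1 \<phi>)"
    by (rule GLP_Box_of_GLPq) simp
qed

end
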